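(* Let $\mathbf{z}\sim\mathcal{N}(\mathbf{0},\mathbf{I}_{d\times d})$, $\mathbf{x}\in\mathbb{R}^d$, $y=\langle\mathbf{x},\mathbf{z}\rangle$, and let $\mathbf{D}^*=[\mathbf{v}_1,\dots,\mathbf{v}_n]\in\mathbb{R}^{d\times n}$ be column-orthogonal, with queries $q_i=\langle\mathbf{v}_i,\mathbf{z}\rangle$ whose observed values are $r_i$. If $\mathbf{D}=[\mathbf{d}_1,\dots,\mathbf{d}_n]=\mathbf{D}^*$, then $$f_{\mathbf{D}}\big(\mathbf{x},\{r_{\pi(i)}\}_{i=1}^k\big)=\sum_{i\in S}\langle\mathbf{d}_i,\mathbf{x}\rangle r_i,$$ where $S=\arg\max_{T\subseteq[n],|T|\le k}\sum_{i\in T}|\langle\mathbf{d}_i,\mathbf{x}\rangle|$ is the set of indices of the $k$ largest values of $|\langle\mathbf{d}_i,\mathbf{x}\rangle|$.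
   Context: Column-orthogonal means $\mathbf{A}^\top\mathbf{A}=\mathbf{I}$. For a query feature matrix $\mathbf{D}$, the IP-OMP selection rule $\pi:[k]\to[n]$ is defined iteratively for $t=1,\dots,k$ by $\pi(t)=\arg\max_i \frac{|\langle\Pi^\perp_{t-1}\mathbf{d}_i,\Pi^\perp_{t-1}\mathbf{x}\rangle|}{\|\Pi^\perp_{t-1}\mathbf{d}_i\|_2\|\Pi^\perp_{t-1}\mathbf{x}\|_2}$ over not-yet-selected indices, with $\Pi^\perp_{t-1}$ the orthogonal projection onto the orthogonal complement of the span of $\mathbf{d}_{\pi(1)},\dots,\mathbf{d}_{\pi(t-1)}$. $f_{\mathbf{D}}(\mathbf{x},\{r_{\pi(i)}\}_{i=1}^k)$ is the maximum likelihood estimator of $y$ given $q_{\pi(i)}=r_{\pi(i)}$ for $i=1,\dots,k$, where $\pi$ is the IP-OMP selection computed with $\mathbf{D}$. *)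

theory Defs
  imports "HOL-Analysis.Analysis"
begin

definition proj_perp :: "(real^'d) set \<Rightarrow> real^'d \<Rightarrow> real^'d" where
  "proj_perp S v = (THE w. v - w \<in> span S \<and> (\<forall>s\<in>S. w \<bullet> s = 0))"

definition std_gauss_density :: "real^'d \<Rightarrow> real" where
  "std_gauss_density z = (2 * pi) powr (- real CARD('d) / 2) * exp (- (norm z)\<^sup>2 / 2)"

text \<open>IP-OMP selection rule (1-indexed steps t = 1..k) computed with the
  feature matrix D (columns d_i = column i D) for query x; ties may be broken arbitrarily.\<close>
definition ipomp_ratio :: "real^'n^'d \<Rightarrow> real^'d \<Rightarrow> (nat \<Rightarrow> 'n) \<Rightarrow> nat \<Rightarrow> 'n \<Rightarrow> real" where
  "ipomp_ratio D x \<pi> t i =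
     (let P = proj_perp ((\<lambda>j. column j D) ` \<pi> ` {1..<t}) in
      \<bar>P (column i D) \<bullet> P x\<bar> / (norm (P (column i D)) * norm (P x)))"

definition ipomp_selection :: "real^'n^'d \<Rightarrow> real^'d \<Rightarrow> nat \<Rightarrow> (nat \<Rightarrow> 'n) \<Rightarrow> bool" where
  "ipomp_selection D x k \<pi> \<longleftrightarrow>
     (\<forall>t\<in>{1..k}. \<pi> t \<notin> \<pi> ` {1..<t} \<and>
        (\<forall>i. i \<notin> \<pi> ` {1..<t} \<longrightarrow> ipomp_ratio D x \<pi> t i \<le> ipomp_ratio D x \<pi> t (\<pi> t)))"

text \<open>f_D(x, {r_{pi(i)}}): maximum likelihood estimate of y = <x, z>, z ~ N(0,I), given the
  observations q_{pi(i)} = <d_{pi(i)}, z> = r_{pi(i)}, i = 1..k: y evaluated at the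
  maximiser of the Gaussian likelihood of z over the set of z consistent with the observations.\<close>
definition mle_estimate :: "real^'n^'d \<Rightarrow> real^'d \<Rightarrow> nat \<Rightarrow> ('n \<Rightarrow> real) \<Rightarrow> (nat \<Rightarrow> 'n) \<Rightarrow> real" where
  "mle_estimate D x k r \<pi> =
     (let A = {z. \<forall>i\<in>{1..k}. column (\<pi> i) D \<bullet> z = r (\<pi> i)} in
      THE y. \<exists>zh\<in>A. (\<forall>z\<in>A. std_gauss_density z \<le> std_gauss_density zh) \<and> y = x \<bullet> zh)"

end

theory Submission
  imports Defs
begin

text \<open>With orthonormal columns, projecting away the already selected columns fixes every
  unselected column and does not change its inner product with \<open>x\<close>, so each IP-OMP step simply
  picks an unselected index maximising \<open>\<bar>\<langle>d\<^sub>i, x\<rangle>\<bar>\<close>: the \<open>k\<close> selected indices are the top \<open>k\<close>,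
  and any set dominating its complement in this way maximises the sum of weights among sets of
  size at most \<open>k\<close>. The maximum likelihood estimate is \<open>x\<close> evaluated at the minimum-norm point
  of the observed affine constraints, which for orthonormal columns is \<open>\<Sum> r\<^sub>i d\<^sub>i\<close>.\<close>

lemma inner_column_column_if_orthonormal:
  fixes D :: "real^'n^'d"
  assumes "transpose D ** D = mat 1"
  shows "column i D \<bullet> column j D = (if i = j then 1 else 0)"
proof -
  have "(transpose D ** D) $ i $ j = mat 1 $ i $ j" using assms by simp
  thus ?thesis by (simp add: matrix_mult_transpose_dot_column mat_def)
qed

lemma proj_perp_eqI:
  assumes "v - w \<in> span S" and "\<forall>s\<in>S. w \<bullet> s = 0"
  shows "proj_perp S v = w"
  unfolding proj_perp_def
proof (rule the_equality)
  fix w' assume w': "v - w' \<in> span S \<and> (\<forall>s\<in>S. w' \<bullet> s = 0)"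
  have "w - w' = (v - w') - (v - w)" by simp
  also have "\<dots> \<in> span S" using w' assms(1) by (blast intro: span_diff)
  finally have "orthogonal (w - w') (w - w')"
    by (rule orthogonal_to_span) (use w' assms(2) in \<open>auto simp: orthogonal_def inner_diff_left\<close>)
  thus "w' = w" by (simp add: orthogonal_def)
qed (use assms in blast)

context
  fixes d :: "'n \<Rightarrow> real^'d"
  assumes orthonormal: "\<And>i j. d i \<bullet> d j = (if i = j then 1 else 0)"
begin

lemma inner_sum_orthonormal:
  assumes "finite J"
  shows "(\<Sum>j\<in>J. c j *\<^sub>R d j) \<bullet> d i = (if i \<in> J then c i else 0)"
  using assms by (simp add: inner_sum_left orthonormal if_distrib cong: if_cong)

lemma proj_perp_orthonormal:
  assumes "finite J"
  shows "proj_perp (d ` J) v = v - (\<Sum>j\<in>J. (v \<bullet> d j) *\<^sub>R d j)"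
  by (rule proj_perp_eqI)
    (use assms in \<open>auto simp: span_sum span_mul span_base inner_diff_left inner_sum_orthonormal\<close>)

lemma proj_perp_orthonormal_notin:
  assumes "finite J" and "i \<notin> J"
  shows "proj_perp (d ` J) (d i) = d i" and "proj_perp (d ` J) v \<bullet> d i = v \<bullet> d i"
  using assms by (auto simp: proj_perp_orthonormal inner_diff_left inner_sum_orthonormal
      orthonormal intro!: sum.neutral)

end

lemma ipomp_ratio_orthonormal:
  fixes D :: "real^'n^'d"
  assumes "transpose D ** D = mat 1" and "i \<notin> \<pi> ` {1..<t}"
  shows "ipomp_ratio D x \<pi> t i =
    \<bar>column i D \<bullet> x\<bar> / norm (proj_perp ((\<lambda>j. column j D) ` \<pi> ` {1..<t}) x)"
proof -
  note orthonormal = inner_column_column_if_orthonormal[OF assms(1)]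
  have "norm (column i D) = 1" using orthonormal[of i i] by (simp add: norm_eq_1)
  thus ?thesis
    unfolding ipomp_ratio_def Let_def
    using proj_perp_orthonormal_notin(1)[OF orthonormal _ assms(2)]
      proj_perp_orthonormal_notin(2)[OF orthonormal _ assms(2), where v = x]
    by (simp add: inner_commute)
qed

lemma ipomp_selection_inj_on:
  assumes "ipomp_selection D x k \<pi>"
  shows "inj_on \<pi> {1..k}"
proof -
  have "\<pi> s \<noteq> \<pi> t" if "s \<in> {1..k}" "t \<in> {1..k}" "s < t" for s t
  proof -
    have "\<pi> t \<notin> \<pi> ` {1..<t}" using assms that(2) unfolding ipomp_selection_def by blast
    moreover have "s \<in> {1..<t}" using that(1,3) by simp
    ultimately show ?thesis by (metis imageI)
  qed
  thus ?thesis by (metis inj_onI linorder_neqE_nat)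
qed

lemma ipomp_selection_orthonormal_greedy:
  fixes D :: "real^'n^'d"
  assumes orth: "transpose D ** D = mat 1" and sel: "ipomp_selection D x k \<pi>"
    and "t \<in> {1..k}" and i: "i \<notin> \<pi> ` {1..<t}"
  shows "\<bar>column i D \<bullet> x\<bar> \<le> \<bar>column (\<pi> t) D \<bullet> x\<bar>"
proof -
  define P where "P = proj_perp ((\<lambda>j. column j D) ` \<pi> ` {1..<t})"
  have t: "\<pi> t \<notin> \<pi> ` {1..<t}"
    and ratio_le: "ipomp_ratio D x \<pi> t i \<le> ipomp_ratio D x \<pi> t (\<pi> t)"
    using sel \<open>t \<in> {1..k}\<close> i unfolding ipomp_selection_def by blast+
  show ?thesis
  proof (cases "P x = 0")
    case True
    \<comment> \<open>Both ratios are then \<open>0\<close> (division by zero), but so is \<open>\<langle>d\<^sub>i, x\<rangle> = \<langle>d\<^sub>i, P x\<rangle>\<close>.\<close>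
    note orthonormal = inner_column_column_if_orthonormal[OF orth]
    have "column i D \<bullet> x = 0"
      using True proj_perp_orthonormal_notin(2)[OF orthonormal _ i, where v = x]
      unfolding P_def by (simp add: inner_commute)
    thus ?thesis by simp
  next
    case False
    have "ipomp_ratio D x \<pi> t j = \<bar>column j D \<bullet> x\<bar> / norm (P x)" if "j \<notin> \<pi> ` {1..<t}" for j
      using ipomp_ratio_orthonormal[OF orth that] unfolding P_def .
    thus ?thesis using ratio_le i t False by (simp add: divide_le_cancel)
  qed
qed

lemma ipomp_selection_orthonormal_dominates:
  fixes D :: "real^'n^'d"
  assumes "transpose D ** D = mat 1" and "ipomp_selection D x k \<pi>"
    and "i \<notin> \<pi> ` {1..k}" and "s \<in> \<pi> ` {1..k}"
  shows "\<bar>column i D \<bullet> x\<bar> \<le> \<bar>column s D \<bullet> x\<bar>"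
proof -
  obtain t where "t \<in> {1..k}" "s = \<pi> t" using assms(4) by blast
  moreover have "i \<notin> \<pi> ` {1..<t}" using assms(3) \<open>t \<in> {1..k}\<close> by auto
  ultimately show ?thesis using ipomp_selection_orthonormal_greedy[OF assms(1,2)] by blast
qed

lemma sum_le_sum_if_dominated:
  fixes w :: "'a \<Rightarrow> 'b::linordered_idom"
  assumes "finite A" "finite B" "card A \<le> card B"
    and dominated: "\<And>a b. a \<in> A \<Longrightarrow> b \<in> B \<Longrightarrow> w a \<le> w b"
    and nonneg: "\<And>b. b \<in> B \<Longrightarrow> 0 \<le> w b"
  shows "sum w A \<le> sum w B"
proof (cases "A = {}")
  case True
  thus ?thesis by (simp add: nonneg sum_nonneg)
next
  case False
  hence "B \<noteq> {}" using assms(1,3) by auto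
  define m where "m = Min (w ` B)"
  have "sum w A \<le> of_nat (card A) * m"
    using dominated \<open>B \<noteq> {}\<close> assms(2) by (intro sum_bounded_above) (simp add: m_def)
  also have "\<dots> \<le> of_nat (card B) * m"
    using assms(2,3) \<open>B \<noteq> {}\<close> nonneg by (intro mult_right_mono) (simp_all add: m_def)
  also have "\<dots> \<le> sum w B"
    using assms(2) by (intro sum_bounded_below) (simp add: m_def)
  finally show ?thesis .
qed

lemma is_arg_max_card_le_if_dominates:
  fixes w :: "'a::finite \<Rightarrow> 'b::linordered_idom"
  assumes "card S = k"
    and dominates: "\<And>i s. i \<notin> S \<Longrightarrow> s \<in> S \<Longrightarrow> w i \<le> w s"
    and nonneg: "\<And>s. s \<in> S \<Longrightarrow> 0 \<le> w s"
  shows "is_arg_max (\<lambda>T. sum w T) (\<lambda>T. card T \<le> k) S"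
proof -
  have "sum w T \<le> sum w S" if "card T \<le> k" for T
  proof -
    have "card (T - S) \<le> card (S - T)"
      using that assms(1) card_Int_Diff[of T S] card_Int_Diff[of S T] by (simp add: Int_commute)
    hence "sum w (T - S) \<le> sum w (S - T)"
      by (intro sum_le_sum_if_dominated) (auto intro: dominates nonneg)
    thus ?thesis
      using sum.Int_Diff[of T w S] sum.Int_Diff[of S w T] by (simp add: Int_commute)
  qed
  thus ?thesis using assms(1) by (auto simp: is_arg_max_def not_less)
qed

lemma std_gauss_density_le_iff:
  fixes a b :: "real^'d"
  shows "std_gauss_density a \<le> std_gauss_density b \<longleftrightarrow> norm b \<le> norm a"
  unfolding std_gauss_density_def by (simp add: power2_le_iff_abs_le)

lemma mle_estimate_eqI:
  assumes "\<forall>i\<in>{1..k}. column (\<pi> i) D \<bullet> z0 = r (\<pi> i)"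
    and "\<And>z. \<forall>i\<in>{1..k}. column (\<pi> i) D \<bullet> z = r (\<pi> i) \<Longrightarrow> z \<noteq> z0 \<Longrightarrow> norm z0 < norm z"
  shows "mle_estimate D x k r \<pi> = x \<bullet> z0"
  unfolding mle_estimate_def Let_def
  using assms by (intro the_equality) (force simp: std_gauss_density_le_iff)+

lemma mle_estimate_orthonormal:
  fixes D :: "real^'n^'d"
  assumes "transpose D ** D = mat 1"
  shows "mle_estimate D x k r \<pi> = (\<Sum>j\<in>\<pi> ` {1..k}. (column j D \<bullet> x) * r j)"
proof -
  note orthonormal = inner_column_column_if_orthonormal[OF assms]
  define S where "S = \<pi> ` {1..k}"
  define z0 where "z0 = (\<Sum>j\<in>S. r j *\<^sub>R column j D)"
  have z0: "column j D \<bullet> z0 = r j" if "j \<in> S" for j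
    using inner_sum_orthonormal[OF orthonormal, of S r j] that
    unfolding z0_def S_def by (simp add: inner_commute)
  have "norm z0 < norm z"
    if "\<forall>i\<in>{1..k}. column (\<pi> i) D \<bullet> z = r (\<pi> i)" "z \<noteq> z0" for z
  proof -
    have "column j D \<bullet> z = r j" if "j \<in> S" for j
      using \<open>\<forall>i\<in>{1..k}. _\<close> that unfolding S_def by blast
    hence "z0 \<bullet> (z - z0) = 0"
      using z0 unfolding z0_def by (simp add: inner_sum_left inner_diff_right)
    hence "(norm z)\<^sup>2 = (norm z0)\<^sup>2 + (norm (z - z0))\<^sup>2"
      using norm_add_Pythagorean[of z0 "z - z0"] by (simp add: orthogonal_def)
    moreover have "norm (z - z0) > 0" using \<open>z \<noteq> z0\<close> by simp
    ultimately have "(norm z0)\<^sup>2 < (norm z)\<^sup>2" by simp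
    thus ?thesis by (rule power_less_imp_less_base) simp
  qed
  hence "mle_estimate D x k r \<pi> = x \<bullet> z0"
    using z0 by (intro mle_estimate_eqI) (auto simp: S_def)
  also have "\<dots> = (\<Sum>j\<in>S. (column j D \<bullet> x) * r j)"
    unfolding z0_def by (simp add: inner_sum_right inner_commute mult.commute)
  finally show ?thesis unfolding S_def .
qed

theorem lemma3p1:
  fixes D :: "real^'n^'d" and x :: "real^'d" and r :: "'n \<Rightarrow> real"
    and k :: nat and \<pi> :: "nat \<Rightarrow> 'n"
  assumes "transpose D ** D = mat 1"
    and "ipomp_selection D x k \<pi>"
  shows "\<exists>S. is_arg_max (\<lambda>T. \<Sum>i\<in>T. \<bar>column i D \<bullet> x\<bar>) (\<lambda>T. card T \<le> k) S \<and>
             mle_estimate D x k r \<pi> = (\<Sum>i\<in>S. (column i D \<bullet> x) * r i)"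
proof -
  have "card (\<pi> ` {1..k}) = k"
    using card_image[OF ipomp_selection_inj_on[OF assms(2)]] by simp
  hence "is_arg_max (\<lambda>T. \<Sum>i\<in>T. \<bar>column i D \<bullet> x\<bar>) (\<lambda>T. card T \<le> k) (\<pi> ` {1..k})"
    using ipomp_selection_orthonormal_dominates[OF assms]
    by (intro is_arg_max_card_le_if_dominates) auto
  thus ?thesis using mle_estimate_orthonormal[OF assms(1)] by blast
qed

end
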